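(* Let $S$ be a finite set of size $n$ and let $\mathcal{X}_{\mathrm{Ab}}=\{*:S\times S\to S\mid (S,* )\text{ is an abelian group}\}$. Then there exists a query-algorithm with respect to $\mathcal{X}_{\mathrm{Ab}}$ which solves product-recovering and uses at most $n$ queries for every $*\in\mathcal{X}_{\mathrm{Ab}}$ (i.e. every leaf has depth at most $n$).
   Context: Let $S$ be a finite set and $\mathcal{X}$ a set of binary operations $*:S\times S\to S$. A query-algorithm with respect to $\mathcal{X}$ is a rooted tree $T$ in which every non-leaf node $v$ is labeled by a pair $(x_v,y_v)\in S^2$ (the query "$x_v*y_v$"), leaves are unlabeled, and every edge from $v$ to a child is labeled by an element of $S$ (a possible answer), distinct edges leaving the same node having distinct labels. It is required that for every $*\in\mathcal{X}$ there is a path $(v_0,\dots,v_k)$ from the root $v_0$ to a leaf $v_k$ such that for each $0\le i<k$ the edge $(v_i,v_{i+1})$ is labeled $x_{v_i}*y_{v_i}$. This leaf is uniquely determined and is denoted $L( * )$, giving a map $L:\mathcal{X}\to\{\text{leaves of }T\}$. The query-algorithm solves product-recovering if $L$ is a bijection. The number of queries used on $*$ is the depth of $L( * )$. *)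

theory Defs
  imports "HOL-Algebra.Group"
begin

text \<open>A non-leaf node carries a query (x,y) and a partial map from answers
  (elements of 'a) to children; distinct edges out of a node thus carry
  distinct labels automatically.\<close>
datatype 'a qtree = Leaf | Query 'a 'a "'a \<Rightarrow> 'a qtree option"

text \<open>Leaves are identified with their addresses: the list of edge labels
  on the path from the root.  The depth of a leaf is the length of its address.\<close>
inductive is_leaf :: "'a qtree \<Rightarrow> 'a list \<Rightarrow> bool" where
  leaf: "is_leaf Leaf []"
| step: "ch a = Some t \<Longrightarrow> is_leaf t p \<Longrightarrow> is_leaf (Query x y ch) (a # p)"

inductive reaches :: "('a \<Rightarrow> 'a \<Rightarrow> 'a) \<Rightarrow> 'a qtree \<Rightarrow> 'a list \<Rightarrow> bool" where
  leaf: "reaches op Leaf []"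
| step: "ch (op x y) = Some t \<Longrightarrow> reaches op t p \<Longrightarrow> reaches op (Query x y ch) (op x y # p)"

definition leaf_of :: "'a qtree \<Rightarrow> ('a \<Rightarrow> 'a \<Rightarrow> 'a) \<Rightarrow> 'a list" where
  "leaf_of T op = (THE p. reaches op T p)"

definition is_query_algorithm :: "('a \<Rightarrow> 'a \<Rightarrow> 'a) set \<Rightarrow> 'a qtree \<Rightarrow> bool" where
  "is_query_algorithm X T \<longleftrightarrow> (\<forall>op\<in>X. \<exists>p. reaches op T p)"

definition solves_product_recovering :: "('a \<Rightarrow> 'a \<Rightarrow> 'a) set \<Rightarrow> 'a qtree \<Rightarrow> bool" where
  "solves_product_recovering X T \<longleftrightarrow>
     is_query_algorithm X T \<and> bij_betw (leaf_of T) X {p. is_leaf T p}"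

definition abelian_ops :: "('a \<Rightarrow> 'a \<Rightarrow> 'a) set" where
  "abelian_ops = {op. \<exists>e. comm_group \<lparr>carrier = UNIV, mult = op, one = e\<rparr>}"

end

theory Submission
  imports Defs
begin

(* The algorithm enumerates the unknown group while it queries it.  It first lists the
   powers a, a^2, a^3, ... of an element a (query a * a^j) until a repeat reveals the
   cyclic subgroup K = <a>.  It then repeatedly picks g outside the current subgroup K and
   lists the cosets K, gK, g^2 K, ... (each new entry is g times the entry |K| places
   earlier) until a repeat shows that the list is again a subgroup.  Every query adds one
   new element to the current list, so after n queries the whole group has been listed.

   Separation: if two abelian group operations give identical answers, then every
   completed list is a subgroup on which both operations agree (lemma
   coset_lists_close_up); once the list exhausts S the operations coincide. *)

fun opow :: "('a \<Rightarrow> 'a \<Rightarrow> 'a) \<Rightarrow> 'a \<Rightarrow> 'a \<Rightarrow> nat \<Rightarrow> 'a" where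
  "opow op e g 0 = e"
| "opow op e g (Suc j) = op g (opow op e g j)"

locale abelian_op =
  fixes op :: "'a \<Rightarrow> 'a \<Rightarrow> 'a" and e :: 'a
  assumes assoc: "op (op x y) z = op x (op y z)"
    and comm: "op x y = op y x"
    and left_unit: "op e x = x"
    and right_inverse: "\<exists>y. op x y = e"
begin

lemma right_unit: "op x e = x"
  using left_unit comm by metis

lemma cancel_left:
  assumes "op x y = op x y'" shows "y = y'"
proof -
  obtain u where u: "op u x = e" using right_inverse[of x] comm by metis
  have "op u (op x y) = op u (op x y')" using assms by simp
  then show ?thesis by (simp add: assoc[symmetric] u left_unit)
qed

lemma swap_middle: "op (op a b) (op c d) = op (op a c) (op b d)"
  by (metis assoc comm)

lemma opow_add: "opow op e g (i + j) = op (opow op e g i) (opow op e g j)"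
  by (induction i) (simp_all add: left_unit assoc)

lemma opow_one: "opow op e g (Suc 0) = g"
  by (simp add: right_unit)

end

lemma abelian_ops_abelian_op:
  assumes "op \<in> abelian_ops" shows "\<exists>e. abelian_op op e"
proof -
  from assms obtain e where "comm_group \<lparr>carrier = UNIV, mult = op, one = e\<rparr>"
    unfolding abelian_ops_def by auto
  then interpret G: comm_group "\<lparr>carrier = UNIV, mult = op, one = e\<rparr>" .
  have "abelian_op op e"
  proof
    fix x y z
    show "op (op x y) z = op x (op y z)" using G.m_assoc[of x y z] by simp
    show "op x y = op y x" using G.m_comm[of x y] by simp
    show "op e x = x" using G.l_one[of x] by simp
    show "\<exists>y. op x y = e" using G.r_inv[of x] by auto
  qed
  then show ?thesis ..
qed

(* An adaptive query strategy is a query map qry (which product to ask in each state) and a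
   transition map adv (the next state after an answer).  answers lists the first f answers
   the strategy receives when the hidden operation is op. *)
fun answers ::
  "('s \<Rightarrow> 'a \<times> 'a) \<Rightarrow> ('s \<Rightarrow> 'a \<Rightarrow> 's) \<Rightarrow> ('a \<Rightarrow> 'a \<Rightarrow> 'a) \<Rightarrow> nat \<Rightarrow> 's \<Rightarrow> 'a list" where
  "answers qry adv op 0 s = []"
| "answers qry adv op (Suc f) s =
     (let z = op (fst (qry s)) (snd (qry s)) in z # answers qry adv op f (adv s z))"

(* The query tree of depth f of a strategy, restricted to a candidate set C: only answers
   that some candidate can give receive a subtree, which is then built for those candidates. *)
fun strategy_tree ::
  "('s \<Rightarrow> 'a \<times> 'a) \<Rightarrow> ('s \<Rightarrow> 'a \<Rightarrow> 's) \<Rightarrow> nat \<Rightarrow> 's \<Rightarrow> ('a \<Rightarrow> 'a \<Rightarrow> 'a) set \<Rightarrow> 'a qtree" where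
  "strategy_tree qry adv 0 s C = Leaf"
| "strategy_tree qry adv (Suc f) s C = Query (fst (qry s)) (snd (qry s))
     (\<lambda>z. if \<exists>op\<in>C. op (fst (qry s)) (snd (qry s)) = z
          then Some (strategy_tree qry adv f (adv s z) {op\<in>C. op (fst (qry s)) (snd (qry s)) = z})
          else None)"

lemma length_answers: "length (answers qry adv op f s) = f"
  by (induction f arbitrary: s) (auto simp: Let_def)

(* An operation follows a unique path, so leaf_of picks exactly that path. *)
lemma reaches_deterministic: "reaches op T p \<Longrightarrow> reaches op T p' \<Longrightarrow> p = p'"
proof (induction arbitrary: p' rule: reaches.induct)
  case (leaf op) then show ?case by (cases rule: reaches.cases) auto
next
  case (step ch op x y t p)
  from step.prems show ?case by (cases rule: reaches.cases) (use step in auto)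
qed

lemma reaches_is_leaf: "reaches op T p \<Longrightarrow> is_leaf T p"
  by (induction rule: reaches.induct) (auto intro: is_leaf.intros)

lemma strategy_tree_reaches:
  "op \<in> C \<Longrightarrow> reaches op (strategy_tree qry adv f s C) (answers qry adv op f s)"
proof (induction f arbitrary: s C)
  case 0 then show ?case by (simp add: reaches.leaf)
next
  case (Suc f)
  obtain x y where q: "qry s = (x, y)" by force
  have "reaches op (strategy_tree qry adv f (adv s (op x y)) {op'\<in>C. op' x y = op x y})
          (answers qry adv op f (adv s (op x y)))"
    using Suc by auto
  then show ?case using Suc.prems q by (auto simp: Let_def intro!: reaches.step)
qed

(* Conversely, each leaf is the answer sequence of some candidate; for depth 0 this needs a
   candidate to exist. *)
lemma strategy_tree_leaf:
  assumes "is_leaf (strategy_tree qry adv f s C) p" and "C \<noteq> {} \<or> 0 < f"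
  shows "\<exists>op\<in>C. p = answers qry adv op f s"
  using assms
proof (induction f arbitrary: s C p)
  case 0 then show ?case by (auto elim: is_leaf.cases)
next
  case (Suc f)
  obtain x y where q: "qry s = (x, y)" by force
  from Suc.prems(1) obtain a p' t where p: "p = a # p'" and lt: "is_leaf t p'"
    and ch: "(if \<exists>op\<in>C. op x y = a
              then Some (strategy_tree qry adv f (adv s a) {op\<in>C. op x y = a}) else None) = Some t"
    unfolding strategy_tree.simps q fst_conv snd_conv by (auto elim: is_leaf.cases)
  from ch have "{op\<in>C. op x y = a} \<noteq> {}" and "t = strategy_tree qry adv f (adv s a) {op\<in>C. op x y = a}"
    by (auto split: if_splits)
  with Suc.IH[of "adv s a" "{op\<in>C. op x y = a}" p'] lt
  obtain op where "op \<in> C" "op x y = a" "p' = answers qry adv op f (adv s a)" by auto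
  then show ?case using p q by (auto simp: Let_def)
qed

theorem strategy_tree_solves:
  assumes separates: "\<And>op1 op2. op1 \<in> C \<Longrightarrow> op2 \<in> C \<Longrightarrow>
                        answers qry adv op1 f s = answers qry adv op2 f s \<Longrightarrow> op1 = op2"
    and "C \<noteq> {} \<or> 0 < f"
  defines "T \<equiv> strategy_tree qry adv f s C"
  shows "solves_product_recovering C T \<and> (\<forall>op\<in>C. length (leaf_of T op) \<le> f)"
proof -
  have reach: "reaches op T (answers qry adv op f s)" if "op \<in> C" for op
    unfolding T_def using that by (rule strategy_tree_reaches)
  have leaf_of_T: "leaf_of T op = answers qry adv op f s" if "op \<in> C" for op
    unfolding leaf_of_def using reach[OF that] reaches_deterministic by blast
  have "inj_on (leaf_of T) C"
    by (rule inj_onI) (use separates leaf_of_T in auto)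
  moreover have "leaf_of T ` C = {p. is_leaf T p}"
  proof
    show "leaf_of T ` C \<subseteq> {p. is_leaf T p}"
      using reach reaches_is_leaf leaf_of_T by auto
    show "{p. is_leaf T p} \<subseteq> leaf_of T ` C"
      using strategy_tree_leaf[OF _ assms(2)] leaf_of_T unfolding T_def by fastforce
  qed
  ultimately show ?thesis
    unfolding solves_product_recovering_def is_query_algorithm_def bij_betw_def
    using reach leaf_of_T by (auto simp: length_answers)
qed

definition subgroup_list :: "('a \<Rightarrow> 'a \<Rightarrow> 'a) \<Rightarrow> 'a \<Rightarrow> 'a list \<Rightarrow> bool" where
  "subgroup_list op e K \<longleftrightarrow>
     K \<noteq> [] \<and> K ! 0 = e \<and> distinct K \<and> (\<forall>x\<in>set K. \<forall>y\<in>set K. op x y \<in> set K)"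

(* S enumerates the cosets K, gK, g^2 K, ... entry by entry: S[i] = g^(i div |K|) K[i mod |K|].
   The list may stop in the middle of a coset. *)
definition coset_list :: "('a \<Rightarrow> 'a \<Rightarrow> 'a) \<Rightarrow> 'a \<Rightarrow> 'a list \<Rightarrow> 'a \<Rightarrow> 'a list \<Rightarrow> bool" where
  "coset_list op e K g S \<longleftrightarrow>
     (\<forall>i<length S. S ! i = op (opow op e g (i div length K)) (K ! (i mod length K)))"

context abelian_op
begin

lemma subgroup_list_inverse:
  assumes K: "subgroup_list op e K" and x: "x \<in> set K"
  shows "\<exists>y\<in>set K. op x y = e"
proof -
  have "inj_on (op x) (set K)" by (meson cancel_left inj_onI)
  moreover have "op x ` set K \<subseteq> set K" using K x unfolding subgroup_list_def by auto
  ultimately have "op x ` set K = set K" by (simp add: endo_inj_surj)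
  moreover have "e \<in> set K" using K unfolding subgroup_list_def by (metis nth_mem length_greater_0_conv)
  ultimately show ?thesis by (metis imageE)
qed

lemma coset_list_first_repeat:
  assumes K: "subgroup_list op e K" and S: "coset_list op e K g S" and dS: "distinct S"
    and kS: "length K \<le> length S"
    and repeat: "op (opow op e g (length S div length K)) (K ! (length S mod length K)) \<in> set S"
  shows "length S mod length K = 0 \<and> opow op e g (length S div length K) \<in> set K"
proof -
  define k where "k = length K"
  define m where "m = length S div k"
  define r where "r = length S mod k"
  have K0: "K ! 0 = e" and dK: "distinct K"
    and closed: "\<And>x y. x \<in> set K \<Longrightarrow> y \<in> set K \<Longrightarrow> op x y \<in> set K"
    using K unfolding subgroup_list_def by auto
  have kpos: "0 < k" using K unfolding subgroup_list_def k_def by simp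
  have Sdec: "length S = m * k + r" and rk: "r < k"
    using kpos unfolding m_def r_def by simp_all
  have S_nth: "\<And>i. i < length S \<Longrightarrow> S ! i = op (opow op e g (i div k)) (K ! (i mod k))"
    using S unfolding coset_list_def k_def by blast
  from repeat obtain idx where idx: "idx < length S" "S ! idx = op (opow op e g m) (K ! r)"
    unfolding m_def r_def k_def by (metis in_set_conv_nth)
  define i where "i = idx div k"
  define s where "s = idx mod k"
  have sk: "s < k" and idx_dec: "idx = i * k + s"
    using kpos unfolding i_def s_def by simp_all
  have same: "op (opow op e g m) (K ! r) = op (opow op e g i) (K ! s)"
    using S_nth[OF idx(1)] idx(2) i_def s_def by simp
  (* The repeated element lies in an earlier coset g^i K with i < m. *)
  have "i \<le> m"
  proof (rule ccontr)
    assume "\<not> i \<le> m"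
    then have "(m + 1) * k \<le> i * k" by (intro mult_le_mono1) simp
    then show False using idx(1) Sdec idx_dec rk by simp
  qed
  moreover have "i \<noteq> m"
  proof
    assume "i = m"
    then have "s < r" and "K ! r = K ! s" using idx(1) Sdec idx_dec same cancel_left by auto
    then show False using dK rk sk k_def by (simp add: nth_eq_iff_index_eq)
  qed
  ultimately have "i < m" by simp
  then obtain d where d: "0 < d" "m = i + d" using less_imp_add_positive by blast
  (* Cancelling g^i shows g^d in K. *)
  have "op (opow op e g i) (op (opow op e g d) (K ! r)) = op (opow op e g i) (K ! s)"
    using same d(2) by (simp add: opow_add assoc)
  then have shift: "op (opow op e g d) (K ! r) = K ! s" by (rule cancel_left)
  obtain k' where k': "k' \<in> set K" "op (K ! r) k' = e"
    using subgroup_list_inverse[OF K, of "K ! r"] rk k_def by auto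
  have "opow op e g d = op (op (opow op e g d) (K ! r)) k'"
    using k'(2) by (simp add: assoc right_unit)
  then have "opow op e g d = op (K ! s) k'" by (simp add: shift)
  then have gd: "opow op e g d \<in> set K" using closed k'(1) sk k_def by simp
  (* By distinctness of S, the element g^d cannot occur again at position d k. *)
  have "\<not> d * k < length S"
  proof
    assume dk: "d * k < length S"
    obtain u where u: "u < k" "K ! u = opow op e g d" using gd k_def by (metis in_set_conv_nth)
    have ul: "u < length S" using u kS k_def by simp
    have "S ! (d * k) = opow op e g d" using S_nth[OF dk] kpos K0 by (simp add: right_unit)
    moreover have "S ! u = opow op e g d" using S_nth[OF ul] u by (simp add: left_unit)
    moreover have "u < d * k" using u d(1) by (simp add: less_le_trans)
    ultimately show False using nth_eq_iff_index_eq[OF dS dk ul] by simp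
  qed
  then have "m * k + r \<le> d * k" using Sdec by simp
  moreover have "d * k \<le> m * k" using d(2) by simp
  ultimately have "r = 0" and "d * k = m * k" by linarith+
  then have "r = 0" and "d = m" using kpos by simp_all
  then show ?thesis using gd unfolding m_def r_def k_def by simp
qed

lemma powers_first_repeat:
  assumes dS: "distinct S" and S: "\<And>i. i < length S \<Longrightarrow> S ! i = opow op e a (Suc i)"
    and repeat: "opow op e a (Suc (length S)) \<in> set S"
  shows "opow op e a (length S) = e"
proof -
  from repeat obtain i where i: "i < length S" "S ! i = opow op e a (Suc (length S))"
    by (metis in_set_conv_nth)
  have "op (opow op e a (Suc i)) (opow op e a (length S - i)) = opow op e a (Suc i + (length S - i))"
    by (rule opow_add[symmetric])
  also have "\<dots> = opow op e a (Suc i)" using i S[OF i(1)] by simp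
  finally have "op (opow op e a (Suc i)) (opow op e a (length S - i)) = op (opow op e a (Suc i)) e"
    by (simp add: right_unit)
  then have period: "opow op e a (length S - i) = e" by (rule cancel_left)
  have "i = 0"
  proof (rule ccontr)
    assume "i \<noteq> 0"
    define j where "j = length S - i"
    have j: "0 < j" "j < length S" "0 < length S" using i \<open>i \<noteq> 0\<close> unfolding j_def by auto
    have "S ! j = op a e" using S[OF j(2)] period j_def by simp
    also have "\<dots> = S ! 0" using S[of 0] j by (simp add: right_unit)
    finally show False using nth_eq_iff_index_eq[OF dS] j by auto
  qed
  then show ?thesis using period by simp
qed

end

definition common_subgroup ::
  "('a \<Rightarrow> 'a \<Rightarrow> 'a) \<Rightarrow> 'a \<Rightarrow> ('a \<Rightarrow> 'a \<Rightarrow> 'a) \<Rightarrow> 'a \<Rightarrow> 'a list \<Rightarrow> bool" where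
  "common_subgroup op1 e1 op2 e2 K \<longleftrightarrow>
     subgroup_list op1 e1 K \<and> e1 = e2 \<and> (\<forall>x\<in>set K. \<forall>y\<in>set K. op1 x y = op2 x y)"

locale two_abelian_ops = G1: abelian_op op1 e1 + G2: abelian_op op2 e2
  for op1 :: "'a \<Rightarrow> 'a \<Rightarrow> 'a" and e1 and op2 :: "'a \<Rightarrow> 'a \<Rightarrow> 'a" and e2
begin

abbreviation "pow1 \<equiv> opow op1 e1"
abbreviation "pow2 \<equiv> opow op2 e2"

(* If g^m lies in the common subgroup K and |S| = m |K|, then all elements g^J x (x in K) are in
   S and are computed alike by both operations, by induction on J using g^J x = g^(J-m) (g^m x). *)
lemma coset_lists_periodic:
  assumes K: "common_subgroup op1 e1 op2 e2 K"
    and S1: "coset_list op1 e1 K g S" and S2: "coset_list op2 e2 K g S"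
    and len: "length S = m * length K" and m: "0 < m"
    and gm: "pow1 g m \<in> set K" "pow1 g m = pow2 g m"
    and x: "x \<in> set K"
  shows "op1 (pow1 g J) x \<in> set S \<and> op1 (pow1 g J) x = op2 (pow2 g J) x"
  using x
proof (induction J arbitrary: x rule: less_induct)
  case (less J)
  define k where "k = length K"
  have closed: "op1 (pow1 g m) x \<in> set K" and agree: "op1 (pow1 g m) x = op2 (pow2 g m) x"
    using K gm less.prems unfolding common_subgroup_def subgroup_list_def by auto
  show ?case
  proof (cases "J < m")
    case True
    obtain t where t: "t < k" "K ! t = x" using less.prems k_def by (metis in_set_conv_nth)
    have "J * k + t < (J + 1) * k" using t by simp
    also have "\<dots> \<le> m * k" using True by (intro mult_le_mono1) simp
    finally have lt: "J * k + t < length S" using len k_def by simp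
    have "(J * k + t) div k = J" "(J * k + t) mod k = t" using t by auto
    then show ?thesis using S1 S2 lt t unfolding coset_list_def k_def by (metis nth_mem)
  next
    case False
    then have split: "J = (J - m) + m" and smaller: "J - m < J" using m by simp_all
    have "op1 (pow1 g J) x = op1 (pow1 g (J - m)) (op1 (pow1 g m) x)"
      by (subst split) (simp add: G1.opow_add G1.assoc)
    moreover have "op2 (pow2 g J) x = op2 (pow2 g (J - m)) (op2 (pow2 g m) x)"
      by (subst split) (simp add: G2.opow_add G2.assoc)
    ultimately show ?thesis using less.IH[OF smaller closed] agree by metis
  qed
qed

lemma coset_lists_common_subgroup:
  assumes K: "common_subgroup op1 e1 op2 e2 K" and dS: "distinct S"
    and S1: "coset_list op1 e1 K g S" and S2: "coset_list op2 e2 K g S"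
    and len: "length S = m * length K" and m: "0 < m"
    and gm: "pow1 g m \<in> set K" "pow1 g m = pow2 g m"
  shows "common_subgroup op1 e1 op2 e2 S"
proof -
  note periodic = coset_lists_periodic[OF K S1 S2 len m gm]
  have K0: "K ! 0 = e1" and e12: "e1 = e2" and Kne: "K \<noteq> []"
    and closedK: "\<And>a b. a \<in> set K \<Longrightarrow> b \<in> set K \<Longrightarrow> op1 a b \<in> set K \<and> op1 a b = op2 a b"
    using K unfolding common_subgroup_def subgroup_list_def by auto
  have Sne: "S \<noteq> []" using len m Kne by auto
  have form: "\<exists>j. \<exists>y\<in>set K. x = op1 (pow1 g j) y \<and> x = op2 (pow2 g j) y" if xS: "x \<in> set S" for x
  proof -
    obtain t where t: "t < length S" "S ! t = x" using xS by (metis in_set_conv_nth)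
    have "K ! (t mod length K) \<in> set K" using Kne by simp
    moreover have "x = op1 (pow1 g (t div length K)) (K ! (t mod length K))"
      and "x = op2 (pow2 g (t div length K)) (K ! (t mod length K))"
      using S1 S2 t unfolding coset_list_def by auto
    ultimately show ?thesis by blast
  qed
  have closed: "op1 x y \<in> set S \<and> op1 x y = op2 x y" if xS: "x \<in> set S" and yS: "y \<in> set S" for x y
  proof -
    obtain j a where a: "a \<in> set K" "x = op1 (pow1 g j) a" "x = op2 (pow2 g j) a"
      using form[OF xS] by blast
    obtain j' b where b: "b \<in> set K" "y = op1 (pow1 g j') b" "y = op2 (pow2 g j') b"
      using form[OF yS] by blast
    have xy1: "op1 x y = op1 (pow1 g (j + j')) (op1 a b)"
      unfolding a(2) b(2) G1.opow_add by (rule G1.swap_middle)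
    have xy2: "op2 x y = op2 (pow2 g (j + j')) (op2 a b)"
      unfolding a(3) b(3) G2.opow_add by (rule G2.swap_middle)
    have ab: "op1 a b \<in> set K" "op1 a b = op2 a b" using closedK[OF a(1) b(1)] by auto
    show ?thesis using periodic[OF ab(1), of "j + j'"] unfolding xy1 xy2 ab(2)[symmetric] .
  qed
  have "S ! 0 = e1" using S1 Sne K0 unfolding coset_list_def by (simp add: G1.left_unit)
  then show ?thesis using Sne dS e12 closed unfolding common_subgroup_def subgroup_list_def by blast
qed

(* The step invoked when the enumeration repeats: the completed list S is again a common
   subgroup. *)
lemma coset_lists_close_up:
  assumes K: "common_subgroup op1 e1 op2 e2 K" and dS: "distinct S"
    and kS: "length K \<le> length S"
    and S1: "coset_list op1 e1 K g S" and S2: "coset_list op2 e2 K g S"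
    and z1: "z = op1 (pow1 g (length S div length K)) (K ! (length S mod length K))"
    and z2: "z = op2 (pow2 g (length S div length K)) (K ! (length S mod length K))"
    and repeat: "z \<in> set S"
  shows "common_subgroup op1 e1 op2 e2 S"
proof -
  define m where "m = length S div length K"
  have K1: "subgroup_list op1 e1 K" and K0: "K ! 0 = e1" and e12: "e1 = e2" and kpos: "0 < length K"
    using K unfolding common_subgroup_def subgroup_list_def by auto
  have r0: "length S mod length K = 0" and gm: "pow1 g m \<in> set K"
    using G1.coset_list_first_repeat[OF K1 S1 dS kS] repeat unfolding z1 m_def by auto
  then have len: "length S = m * length K" unfolding m_def by (metis div_mult_mod_eq add_0_right)
  have m_pos: "0 < m" using kS kpos unfolding m_def by (simp add: div_greater_zero_iff)
  have "pow1 g m = z" using z1 r0 K0 G1.right_unit[of "pow1 g m"] m_def by simp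
  moreover have "pow2 g m = z" using z2 r0 K0 e12 G2.right_unit[of "pow2 g m"] m_def by simp
  ultimately have "pow1 g m = pow2 g m" by simp
  then show ?thesis by (rule coset_lists_common_subgroup[OF K dS S1 S2 len m_pos gm])
qed

end

(* States of the strategy: listing the powers of the first element (Cyclic S), listing the
   cosets of a known subgroup K under a new element g (Coset K S g), or done. *)
datatype 'a phase = Cyclic "'a list" | Coset "'a list" "'a list" 'a | Finished

definition start_coset :: "'a list \<Rightarrow> 'a phase" where
  "start_coset K = (if set K = UNIV then Finished
     else Coset K (K @ [SOME x. x \<notin> set K]) (SOME x. x \<notin> set K))"

(* In the cyclic phase ask a * a^j; in the coset phase ask g times the entry |K| places back. *)
fun query :: "'a phase \<Rightarrow> 'a \<times> 'a" where
  "query (Cyclic S) = (hd S, last S)"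
| "query (Coset K S g) = (g, S ! (length S - length K))"
| "query Finished = (undefined, undefined)"

(* A new answer extends the current list; a repeated answer closes the list into a subgroup
   (in the cyclic phase rotated so that it starts with the unit a^L = e). *)
fun advance :: "'a phase \<Rightarrow> 'a \<Rightarrow> 'a phase" where
  "advance (Cyclic S) z = (if z \<in> set S then start_coset (last S # butlast S) else Cyclic (S @ [z]))"
| "advance (Coset K S g) z = (if z \<in> set S then start_coset S else Coset K (S @ [z]) g)"
| "advance Finished z = Finished"

context two_abelian_ops
begin

(* The invariant after t queries for two operations that gave the same answers: the current
   list has t + 1 distinct elements and is the intended enumeration for both operations. *)
fun consistent :: "nat \<Rightarrow> 'a phase \<Rightarrow> bool" where
  "consistent t Finished \<longleftrightarrow> op1 = op2"
| "consistent t (Cyclic S) \<longleftrightarrow> length S = Suc t \<and> distinct S \<and>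
     (\<forall>i<length S. S ! i = pow1 (hd S) (Suc i) \<and> S ! i = pow2 (hd S) (Suc i))"
| "consistent t (Coset K S g) \<longleftrightarrow> length S = Suc t \<and> distinct S \<and> length K < length S \<and>
     common_subgroup op1 e1 op2 e2 K \<and> coset_list op1 e1 K g S \<and> coset_list op2 e2 K g S"

lemma consistent_start_coset:
  assumes K: "common_subgroup op1 e1 op2 e2 K" and len: "length K = t"
  shows "consistent t (start_coset K)"
proof (cases "set K = UNIV")
  case True
  have "start_coset K = Finished" using True unfolding start_coset_def by simp
  moreover have "op1 = op2" using K True unfolding common_subgroup_def by blast
  ultimately show ?thesis by (metis consistent.simps(1))
next
  case False
  define g where "g = (SOME x. x \<notin> set K)"
  have g: "g \<notin> set K" unfolding g_def using False by (metis (mono_tags) UNIV_eq_I someI_ex)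
  have K0: "K ! 0 = e1" and e12: "e1 = e2" and dK: "distinct K" and kpos: "0 < length K"
    using K unfolding common_subgroup_def subgroup_list_def by auto
  have "coset_list op e K g (K @ [g])" if G: "abelian_op op e" and Ke: "K ! 0 = e" for op e
    unfolding coset_list_def
  proof (intro allI impI)
    fix i assume "i < length (K @ [g])"
    then consider "i < length K" | "i = length K" by fastforce
    then show "(K @ [g]) ! i = op (opow op e g (i div length K)) (K ! (i mod length K))"
    proof cases
      case 1 then show ?thesis by (simp add: nth_append abelian_op.left_unit[OF G])
    next
      case 2
      then have "i div length K = Suc 0" "i mod length K = 0" using kpos by auto
      then show ?thesis using 2 Ke by (simp add: abelian_op.opow_one[OF G] abelian_op.right_unit[OF G])
    qed
  qed
  then have "coset_list op1 e1 K g (K @ [g])" "coset_list op2 e2 K g (K @ [g])"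
    using G1.abelian_op_axioms G2.abelian_op_axioms K0 e12 by auto
  then show ?thesis using False len dK g K unfolding start_coset_def g_def[symmetric] by simp
qed

lemma consistent_advance_cyclic:
  assumes I: "consistent t (Cyclic S)"
    and z1: "op1 (hd S) (last S) = z" and z2: "op2 (hd S) (last S) = z"
  shows "consistent (Suc t) (advance (Cyclic S) z)"
proof -
  define a where "a = hd S"
  have lS: "length S = Suc t" and dS: "distinct S"
    and S1: "\<And>i. i < length S \<Longrightarrow> S ! i = pow1 a (Suc i)"
    and S2: "\<And>i. i < length S \<Longrightarrow> S ! i = pow2 a (Suc i)"
    using I a_def by auto
  have last_S: "last S = S ! (length S - 1)" using lS by (intro last_conv_nth) auto
  have last1: "last S = pow1 a (length S)" and last2: "last S = pow2 a (length S)"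
    using S1[of "length S - 1"] S2[of "length S - 1"] last_S lS by auto
  have z1': "z = pow1 a (Suc (length S))" and z2': "z = pow2 a (Suc (length S))"
    using z1 z2 last1 last2 a_def by simp_all
  show ?thesis
  proof (cases "z \<in> set S")
    case False
    have hd_Sz: "hd (S @ [z]) = a" using lS a_def by (cases S) simp_all
    have Sz: "(S @ [z]) ! i = pow1 a (Suc i) \<and> (S @ [z]) ! i = pow2 a (Suc i)"
      if "i < length (S @ [z])" for i
    proof (cases "i < length S")
      case False
      then have "i = length S" using that by simp
      then show ?thesis using z1' z2' by simp
    qed (use S1 S2 in \<open>simp add: nth_append\<close>)
    have "length (S @ [z]) = Suc (Suc t)" and "distinct (S @ [z])" using lS dS False by auto
    then have "consistent (Suc t) (Cyclic (S @ [z]))" unfolding consistent.simps hd_Sz using Sz by blast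
    then show ?thesis using False by (simp del: consistent.simps)
  next
    case True
    (* The powers of a have closed up: a^L = e in both groups, with L = length S. *)
    have pe1: "pow1 a (length S) = e1" using G1.powers_first_repeat[OF dS S1] True z1' by simp
    have pe2: "pow2 a (length S) = e2" using G2.powers_first_repeat[OF dS S2] True z2' by simp
    have e12: "e1 = e2" using pe1 pe2 last1 last2 by simp
    define K where "K = last S # butlast S"
    have lK: "length K = length S" unfolding K_def using lS by simp
    have dK: "distinct K" unfolding K_def using dS lS
      by (metis append_butlast_last_id distinct.simps(2) distinct_append list.size(3) nat.distinct(1)
          not_distinct_conv_prefix)
    have K_nth: "K ! i = pow1 a i \<and> K ! i = pow2 a i" if "i < length K" for i
    proof (cases i)
      case 0 then show ?thesis using last1 last2 pe1 pe2 unfolding K_def by simp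
    next
      case (Suc j)
      then have "j < length S - 1" using that lK by simp
      then have "K ! i = S ! j" using Suc unfolding K_def by (simp add: nth_butlast)
      then show ?thesis using S1[of j] S2[of j] Suc \<open>j < length S - 1\<close> by simp
    qed
    (* So K = [e, a, ..., a^(L-1)] is the list of cosets of the trivial subgroup under a. *)
    have trivial: "common_subgroup op1 e1 op2 e2 [e1]"
      unfolding common_subgroup_def subgroup_list_def using e12 G1.left_unit[of e1] G2.left_unit[of e2] by simp
    have S1: "coset_list op1 e1 [e1] a K"
      unfolding coset_list_def using K_nth[THEN conjunct1] by (simp add: G1.right_unit)
    have S2: "coset_list op2 e2 [e1] a K"
      unfolding coset_list_def using K_nth[THEN conjunct2] by (simp add: G2.right_unit[folded e12])
    have z1: "e1 = op1 (pow1 a (length K div length [e1])) ([e1] ! (length K mod length [e1]))"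
      using pe1 lK by (simp add: G1.right_unit)
    have z2: "e1 = op2 (pow2 a (length K div length [e1])) ([e1] ! (length K mod length [e1]))"
    proof -
      have "pow2 a (length K) = e1" using pe2 lK e12 by simp
      then show ?thesis by (simp add: G2.right_unit[folded e12])
    qed
    have "e1 \<in> set K" unfolding K_def using pe1 last1 by simp
    then have "common_subgroup op1 e1 op2 e2 K"
      using coset_lists_close_up[OF trivial dK _ S1 S2 z1 z2] lK lS by simp
    then have "consistent (Suc t) (start_coset K)" using consistent_start_coset lK lS by simp
    then show ?thesis using True K_def by (simp del: consistent.simps)
  qed
qed

lemma consistent_advance_coset:
  assumes I: "consistent t (Coset K S g)"
    and z1: "op1 g (S ! (length S - length K)) = z" and z2: "op2 g (S ! (length S - length K)) = z"
  shows "consistent (Suc t) (advance (Coset K S g) z)"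
proof -
  define k where "k = length K"
  have lS: "length S = Suc t" and dS: "distinct S" and kS: "k < length S"
    and K: "common_subgroup op1 e1 op2 e2 K"
    and S1: "coset_list op1 e1 K g S" and S2: "coset_list op2 e2 K g S"
    using I k_def by auto
  have kpos: "0 < k" using K unfolding common_subgroup_def subgroup_list_def k_def by simp
  (* The queried element g * S[|S| - k] is the next entry of the coset enumeration. *)
  define p where "p = length S - k"
  have p: "p < length S" "p div k = length S div k - 1" "p mod k = length S mod k" "1 \<le> length S div k"
    using kpos kS le_div_geq[OF kpos, of "length S"] le_mod_geq[of k "length S"]
    unfolding p_def by auto
  have next1: "z = op1 (pow1 g (length S div k)) (K ! (length S mod k))"
  proof -
    have "z = op1 g (op1 (pow1 g (p div k)) (K ! (p mod k)))"
      using z1 S1 p(1) unfolding coset_list_def p_def k_def by simp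
    also have "\<dots> = op1 (pow1 g (Suc (p div k))) (K ! (p mod k))" by (simp add: G1.assoc)
    finally show ?thesis using p by simp
  qed
  have next2: "z = op2 (pow2 g (length S div k)) (K ! (length S mod k))"
  proof -
    have "z = op2 g (op2 (pow2 g (p div k)) (K ! (p mod k)))"
      using z2 S2 p(1) unfolding coset_list_def p_def k_def by simp
    also have "\<dots> = op2 (pow2 g (Suc (p div k))) (K ! (p mod k))" by (simp add: G2.assoc)
    finally show ?thesis using p by simp
  qed
  show ?thesis
  proof (cases "z \<in> set S")
    case False
    have "coset_list op1 e1 K g (S @ [z])" "coset_list op2 e2 K g (S @ [z])"
      using S1 S2 next1 next2 unfolding coset_list_def k_def by (auto simp: nth_append less_Suc_eq)
    then have "consistent (Suc t) (Coset K (S @ [z]) g)" using lS dS False K kS k_def by simp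
    then show ?thesis using False by (simp del: consistent.simps)
  next
    case True
    then have "common_subgroup op1 e1 op2 e2 S"
      using coset_lists_close_up[OF K dS _ S1 S2] next1 next2 kS k_def by simp
    then have "consistent (Suc t) (start_coset S)" using consistent_start_coset lS by simp
    then show ?thesis using True by (simp del: consistent.simps)
  qed
qed

lemma consistent_advance:
  assumes "consistent t s"
    and "op1 (fst (query s)) (snd (query s)) = z" and "op2 (fst (query s)) (snd (query s)) = z"
  shows "consistent (Suc t) (advance s z)"
proof (cases s)
  case (Cyclic S)
  then show ?thesis using assms consistent_advance_cyclic[of t S z]
    by (simp del: advance.simps consistent.simps)
next
  case (Coset K S g)
  then show ?thesis using assms consistent_advance_coset[of t K S g z]
    by (simp del: advance.simps consistent.simps)
next
  case Finished
  then show ?thesis using assms(1) by (metis advance.simps(3) consistent.simps(1))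
qed

lemma consistent_phase_length:
  assumes "finite (UNIV :: 'a set)" and "consistent t s" and "s \<noteq> Finished"
  shows "t < card (UNIV :: 'a set)"
proof -
  have bound: "length S \<le> card (UNIV :: 'a set)" if "distinct S" for S :: "'a list"
    using that assms(1) by (metis card_mono distinct_card subset_UNIV)
  show ?thesis
  proof (cases s)
    case (Cyclic S) then show ?thesis using assms(2) bound[of S] by simp
  next
    case (Coset K S g) then show ?thesis using assms(2) bound[of S] by simp
  qed (use assms(3) in simp)
qed

(* If two operations give the same answers from a consistent state for enough steps to exhaust
   the type, the phase must have finished, so the operations coincide. *)
lemma same_answers_same_op:
  assumes "finite (UNIV :: 'a set)"
  shows "consistent t s \<Longrightarrow> answers query advance op1 f s = answers query advance op2 f s
    \<Longrightarrow> card (UNIV :: 'a set) \<le> t + f \<Longrightarrow> op1 = op2"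
proof (induction f arbitrary: t s)
  case 0
  then have "s = Finished" using consistent_phase_length[OF assms] by fastforce
  then show ?case using 0 by (metis consistent.simps(1))
next
  case (Suc f)
  define z1 where "z1 = op1 (fst (query s)) (snd (query s))"
  define z2 where "z2 = op2 (fst (query s)) (snd (query s))"
  have answers_eq: "z1 # answers query advance op1 f (advance s z1)
                 = z2 # answers query advance op2 f (advance s z2)"
    using Suc.prems(2) unfolding z1_def z2_def by (simp only: answers.simps Let_def)
  then have z: "z2 = z1" by (rule list.inject[THEN iffD1, THEN conjunct1, symmetric])
  have same: "answers query advance op1 f (advance s z1) = answers query advance op2 f (advance s z1)"
    using answers_eq unfolding z by (rule list.inject[THEN iffD1, THEN conjunct2])
  have next_consistent: "consistent (Suc t) (advance s z1)"
    using consistent_advance[OF Suc.prems(1) z1_def[symmetric] z2_def[symmetric, unfolded z]] .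
  have "card (UNIV :: 'a set) \<le> Suc t + f" using Suc.prems(3) by simp
  then show ?case by (rule Suc.IH[OF next_consistent same])
qed

end

lemma abelian_ops_separated:
  fixes op1 op2 :: "'a::finite \<Rightarrow> 'a \<Rightarrow> 'a"
  assumes "op1 \<in> abelian_ops" and "op2 \<in> abelian_ops"
    and "answers query advance op1 (card (UNIV :: 'a set)) (Cyclic [x])
       = answers query advance op2 (card (UNIV :: 'a set)) (Cyclic [x])"
  shows "op1 = op2"
proof -
  obtain e1 e2 where G: "abelian_op op1 e1" "abelian_op op2 e2"
    using assms(1,2) abelian_ops_abelian_op by blast
  interpret two_abelian_ops op1 e1 op2 e2 using G by (intro two_abelian_ops.intro)
  have "consistent 0 (Cyclic [x])" by (simp add: G1.right_unit G2.right_unit)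
  from same_answers_same_op[OF finite_UNIV this assms(3)] show ?thesis by simp
qed

theorem mainTheorem5:
  fixes n :: nat and X :: "('a::finite \<Rightarrow> 'a \<Rightarrow> 'a) set"
  assumes "card (UNIV :: 'a set) = n"
    and "X = abelian_ops"
  shows "\<exists>T :: 'a qtree. solves_product_recovering X T
           \<and> (\<forall>op\<in>X. length (leaf_of T op) \<le> n)"
proof -
  have separates: "op1 = op2"
    if "op1 \<in> X" "op2 \<in> X"
      and "answers query advance op1 n (Cyclic [undefined])
         = answers query advance op2 n (Cyclic [undefined])" for op1 op2
    using abelian_ops_separated[of op1 op2 undefined] that assms by simp
  have "X \<noteq> {} \<or> 0 < n" using assms(1) card_gt_0_iff[of "UNIV :: 'a set"] by simp
  from strategy_tree_solves[OF separates this] show ?thesis by (rule exI)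
qed

end
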